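(* For every integer $d\ge2$ there are infinitely many $d$-degenerate graphs $H$ with $\alpha_d(H)<\mathrm{flap}_d(H)$.
   Context: Graphs are finite and simple. A graph is $d$-degenerate if every subgraph has minimum degree at most $d$. $\alpha_d(H)$ is the maximum size of a set of pairwise non-adjacent vertices of $H$ each of degree at most $d$ in $H$. A separation of $H$ is an ordered pair $(A,B)$ of subsets of $V(H)$ with $A\cup B=V(H)$ and no edge between $A\setminus B$ and $B\setminus A$; its order is $|A\cap B|$. A collection $\mathcal C$ of separations is independent if $A\setminus B\ne\emptyset$ for each $(A,B)\in\mathcal C$ and $A\subseteq D$, $C\subseteq B$ for all distinct $(A,B),(C,D)\in\mathcal C$. $\mathrm{flap}_d(H)$ is the maximum size of an independent collection of separations of $H$ each of order at most $d$. *)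

theory Defs
  imports Main
begin

definition graph :: "'a set \<Rightarrow> 'a set set \<Rightarrow> bool" where
  "graph V E \<longleftrightarrow> finite V \<and> (\<forall>e\<in>E. e \<subseteq> V \<and> card e = 2)"

definition degree :: "'a set set \<Rightarrow> 'a \<Rightarrow> nat" where
  "degree E v = card {e \<in> E. v \<in> e}"

definition subgraph :: "'a set \<Rightarrow> 'a set set \<Rightarrow> 'a set \<Rightarrow> 'a set set \<Rightarrow> bool" where
  "subgraph V' E' V E \<longleftrightarrow> V' \<subseteq> V \<and> E' \<subseteq> E \<and> (\<forall>e\<in>E'. e \<subseteq> V')"

definition degenerate :: "nat \<Rightarrow> 'a set \<Rightarrow> 'a set set \<Rightarrow> bool" where
  "degenerate d V E \<longleftrightarrow>
     (\<forall>V' E'. subgraph V' E' V E \<and> V' \<noteq> {} \<longrightarrow> (\<exists>v\<in>V'. degree E' v \<le> d))"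

definition indep_set :: "'a set set \<Rightarrow> 'a set \<Rightarrow> bool" where
  "indep_set E S \<longleftrightarrow> (\<forall>e\<in>E. \<not> e \<subseteq> S)"

definition alpha :: "nat \<Rightarrow> 'a set \<Rightarrow> 'a set set \<Rightarrow> nat" where
  "alpha d V E = Max {card S | S. S \<subseteq> V \<and> indep_set E S \<and> (\<forall>v\<in>S. degree E v \<le> d)}"

definition separation :: "'a set \<Rightarrow> 'a set set \<Rightarrow> 'a set \<Rightarrow> 'a set \<Rightarrow> bool" where
  "separation V E A B \<longleftrightarrow> A \<subseteq> V \<and> B \<subseteq> V \<and> A \<union> B = V \<and>
     (\<forall>e\<in>E. \<not> (e \<inter> (A - B) \<noteq> {} \<and> e \<inter> (B - A) \<noteq> {}))"

definition sep_order :: "'a set \<Rightarrow> 'a set \<Rightarrow> nat" where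
  "sep_order A B = card (A \<inter> B)"

definition independent_seps :: "('a set \<times> 'a set) set \<Rightarrow> bool" where
  "independent_seps C \<longleftrightarrow>
     (\<forall>(A,B)\<in>C. A - B \<noteq> {}) \<and>
     (\<forall>(A,B)\<in>C. \<forall>(C',D)\<in>C. (A,B) \<noteq> (C',D) \<longrightarrow> A \<subseteq> D \<and> C' \<subseteq> B)"

definition flap :: "nat \<Rightarrow> 'a set \<Rightarrow> 'a set set \<Rightarrow> nat" where
  "flap d V E = Max {card C | C. independent_seps C \<and>
      (\<forall>(A,B)\<in>C. separation V E A B \<and> sep_order A B \<le> d)}"

end

theory Submission
  imports Defs
begin

(* The witnesses are necklaces of k beads. Bead i consists of the vertices
   i(d+2)+1, ..., i(d+2)+(d+2), two of them adjacent when at distance at most d: a copy of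
   K_(d+2) minus the edge between its two ends. Consecutive beads are joined end to start,
   and a hub vertex 0 closes the cycle. Every vertex except the hub has degree d+1, so
   alpha_d <= 1; each bead is cut off by the separation through its two ends, of order
   2 <= d, and these k separations are independent, so flap_d >= k. Listing the vertices
   in increasing order, each has at most d later neighbours, which gives d-degeneracy. *)

lemma card_le_degree:
  assumes "finite E" and "\<And>u. u \<in> N \<Longrightarrow> {v, u} \<in> E" and "v \<notin> N"
  shows "card N \<le> degree E v"
proof -
  have "inj_on (\<lambda>u. {v, u}) N"
    using assms(3) by (auto simp: inj_on_def doubleton_eq_iff)
  then have "card N = card ((\<lambda>u. {v, u}) ` N)"
    by (simp add: card_image)
  also have "\<dots> \<le> card {e \<in> E. v \<in> e}"
    using assms(1,2) by (intro card_mono) auto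
  finally show ?thesis
    unfolding degree_def .
qed

lemma degenerate_if_larger_neighbours_le:
  fixes V :: "'a::linorder set"
  assumes G: "graph V E"
    and larger: "\<And>v. v \<in> V \<Longrightarrow> card {u \<in> V. {v, u} \<in> E \<and> v < u} \<le> d"
  shows "degenerate d V E"
  unfolding degenerate_def
proof (intro allI impI, elim conjE)
  fix V' E' assume sub: "subgraph V' E' V E" and "V' \<noteq> {}"
  have "V' \<subseteq> V"
    using sub unfolding subgraph_def by blast
  then have "finite V'"
    using G finite_subset unfolding graph_def by blast
  define x where "x = Min V'"
  have "x \<in> V'"
    using \<open>finite V'\<close> \<open>V' \<noteq> {}\<close> unfolding x_def by simp
  then have "x \<in> V"
    using \<open>V' \<subseteq> V\<close> by blast
  have "{e \<in> E'. x \<in> e} \<subseteq> (\<lambda>u. {x, u}) ` {u \<in> V. {x, u} \<in> E \<and> x < u}"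
  proof
    fix e assume e: "e \<in> {e \<in> E'. x \<in> e}"
    then have "e \<in> E" "e \<subseteq> V'" "card e = 2"
      using sub G unfolding subgraph_def graph_def by auto
    then obtain u where u: "e = {x, u}" "u \<noteq> x"
      using e by (auto simp: card_2_iff doubleton_eq_iff)
    have "u \<in> V'"
      using u \<open>e \<subseteq> V'\<close> by auto
    then have "x < u"
      using u \<open>finite V'\<close> unfolding x_def by (simp add: order_le_neq_trans)
    then show "e \<in> (\<lambda>u. {x, u}) ` {u \<in> V. {x, u} \<in> E \<and> x < u}"
      using u \<open>e \<in> E\<close> \<open>u \<in> V'\<close> sub unfolding subgraph_def by auto
  qed
  moreover have "finite {u \<in> V. {x, u} \<in> E \<and> x < u}"
    using G unfolding graph_def by simp
  ultimately have "degree E' x \<le> card {u \<in> V. {x, u} \<in> E \<and> x < u}"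
    unfolding degree_def by (metis (no_types, lifting) card_image_le card_mono finite_imageI le_trans)
  then show "\<exists>v\<in>V'. degree E' v \<le> d"
    using larger[OF \<open>x \<in> V\<close>] \<open>x \<in> V'\<close> le_trans by blast
qed

lemma alpha_le_card:
  assumes G: "graph V E" and "finite L"
    and low: "\<And>v. v \<in> V \<Longrightarrow> degree E v \<le> d \<Longrightarrow> v \<in> L"
  shows "alpha d V E \<le> card L"
proof -
  let ?K = "{card S | S. S \<subseteq> V \<and> indep_set E S \<and> (\<forall>v\<in>S. degree E v \<le> d)}"
  have "?K \<subseteq> {..card L}"
  proof
    fix n assume "n \<in> ?K"
    then obtain S where "n = card S" "S \<subseteq> V" "\<forall>v\<in>S. degree E v \<le> d"
      by blast
    then have "S \<subseteq> L"
      using low by blast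
    then show "n \<in> {..card L}"
      using \<open>n = card S\<close> \<open>finite L\<close> by (simp add: card_mono)
  qed
  moreover have "indep_set E {}"
    using G unfolding graph_def indep_set_def by fastforce
  then have "0 \<in> ?K"
    by (intro CollectI exI[of _ "{}"]) simp
  ultimately show ?thesis
    unfolding alpha_def using finite_subset[of ?K] by (intro Max.boundedI) auto
qed

lemma card_le_flap:
  assumes "finite V" and "independent_seps C"
    and "\<forall>(A, B)\<in>C. separation V E A B \<and> sep_order A B \<le> d"
  shows "card C \<le> flap d V E"
proof -
  let ?K = "{card C | C. independent_seps C \<and> (\<forall>(A, B)\<in>C. separation V E A B \<and> sep_order A B \<le> d)}"
  have "?K \<subseteq> {..card (Pow V \<times> Pow V)}"
  proof
    fix n assume "n \<in> ?K"
    then obtain C' where "n = card C'" "\<forall>(A, B)\<in>C'. separation V E A B"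
      by auto
    then have "C' \<subseteq> Pow V \<times> Pow V"
      unfolding separation_def by auto
    then have "card C' \<le> card (Pow V \<times> Pow V)"
      using \<open>finite V\<close> by (intro card_mono) auto
    then show "n \<in> {..card (Pow V \<times> Pow V)}"
      using \<open>n = card C'\<close> by simp
  qed
  then have "finite ?K"
    using finite_subset by blast
  moreover have "card C \<in> ?K"
    using assms(2,3) by blast
  ultimately show ?thesis
    unfolding flap_def by (rule Max_ge)
qed

lemma independent_seps_image:
  assumes "\<And>i. i \<in> I \<Longrightarrow> fst (f i) - snd (f i) \<noteq> {}"
    and "\<And>i j. i \<in> I \<Longrightarrow> j \<in> I \<Longrightarrow> i \<noteq> j \<Longrightarrow> fst (f i) \<subseteq> snd (f j)"
  shows "independent_seps (f ` I)"
  unfolding independent_seps_def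
proof (intro conjI ballI)
  fix p assume "p \<in> f ` I"
  then show "case p of (A, B) \<Rightarrow> A - B \<noteq> {}"
    using assms(1) by (auto simp: split_beta)
next
  fix p assume "p \<in> f ` I"
  then obtain i where "i \<in> I" "p = f i"
    by blast
  then show "case p of (A, B) \<Rightarrow> \<forall>(C, D)\<in>f ` I. (A, B) \<noteq> (C, D) \<longrightarrow> A \<subseteq> D \<and> C \<subseteq> B"
    using assms(2) by (auto simp: split_beta)
qed

definition bead :: "nat \<Rightarrow> nat \<Rightarrow> nat set" where
  "bead d i = {i * (d + 2)<..i * (d + 2) + (d + 2)}"

definition bead_interior :: "nat \<Rightarrow> nat \<Rightarrow> nat set" where
  "bead_interior d i = {i * (d + 2) + 1<..<i * (d + 2) + (d + 2)}"

lemma bead_unique: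
  assumes "x \<in> bead d i" and "x \<in> bead d j"
  shows "i = j"
proof (rule ccontr)
  assume "i \<noteq> j"
  then have "Suc (min i j) * (d + 2) \<le> max i j * (d + 2)"
    by (intro mult_le_mono1) auto
  then show False
    using assms unfolding bead_def by (cases "i < j") auto
qed

lemma mem_bead_div:
  assumes "0 < v"
  shows "v \<in> bead d ((v - 1) div (d + 2))"
proof -
  let ?q = "(v - 1) div (d + 2)"
  have "?q * (d + 2) + (v - 1) mod (d + 2) = v - 1"
    by (rule div_mult_mod_eq)
  moreover have "(v - 1) mod (d + 2) < d + 2"
    by simp
  ultimately show ?thesis
    using assms unfolding bead_def greaterThanAtMost_iff by linarith
qed

lemma bead_subset_atMost:
  assumes "i < k"
  shows "bead d i \<subseteq> {..k * (d + 2)}"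
proof -
  have "Suc i * (d + 2) \<le> k * (d + 2)"
    using assms by (intro mult_le_mono1) simp
  then show ?thesis
    unfolding bead_def by auto
qed

lemma bead_index_less:
  assumes "v \<in> bead d i" and "v \<le> k * (d + 2)"
  shows "i < k"
proof -
  have "i * (d + 2) < k * (d + 2)"
    using assms unfolding bead_def greaterThanAtMost_iff by linarith
  then show ?thesis
    by (rule mult_less_cancel2[THEN iffD1, THEN conjunct2])
qed

lemma bead_interior_subset: "bead_interior d i \<subseteq> bead d i"
  unfolding bead_def bead_interior_def by auto

lemma zero_not_mem_bead: "0 \<notin> bead d i"
  unfolding bead_def by simp

definition necklace_adj :: "nat \<Rightarrow> nat \<Rightarrow> nat \<Rightarrow> nat \<Rightarrow> bool" where
  "necklace_adj d k u v \<longleftrightarrow>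
     v = u + 1 \<or> (u = 0 \<and> v = k * (d + 2)) \<or> (v \<le> u + d \<and> (\<exists>i. u \<in> bead d i \<and> v \<in> bead d i))"

definition necklace :: "nat \<Rightarrow> nat \<Rightarrow> nat set set" where
  "necklace d k = {{u, v} | u v. u < v \<and> v \<le> k * (d + 2) \<and> necklace_adj d k u v}"

lemma doubleton_mem_necklace_iff:
  assumes "u < v"
  shows "{u, v} \<in> necklace d k \<longleftrightarrow> v \<le> k * (d + 2) \<and> necklace_adj d k u v"
  using assms unfolding necklace_def by (auto simp: doubleton_eq_iff)

lemma graph_necklace: "graph {..k * (d + 2)} (necklace d k)"
  unfolding graph_def necklace_def by auto

lemma finite_necklace: "finite (necklace d k)"
proof (rule finite_subset)
  show "necklace d k \<subseteq> Pow {..k * (d + 2)}"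
    unfolding necklace_def by auto
qed simp

lemma necklace_path_edge:
  assumes "u < k * (d + 2)"
  shows "{u, u + 1} \<in> necklace d k"
  using assms by (simp add: doubleton_mem_necklace_iff necklace_adj_def)

lemma necklace_hub_edge:
  assumes "0 < k"
  shows "{k * (d + 2), 0} \<in> necklace d k"
  using assms doubleton_mem_necklace_iff[of 0 "k * (d + 2)" d k]
  by (simp add: necklace_adj_def insert_commute)

lemma necklace_bead_edge:
  assumes "u \<in> bead d i" "w \<in> bead d i" "i < k" "u \<noteq> w" "u \<le> w + d" "w \<le> u + d"
  shows "{u, w} \<in> necklace d k"
proof -
  have "u \<le> k * (d + 2)" "w \<le> k * (d + 2)"
    using assms(1-3) bead_subset_atMost by blast+
  then show ?thesis
    using assms doubleton_mem_necklace_iff[of u w d k] doubleton_mem_necklace_iff[of w u d k]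
    unfolding necklace_adj_def by (cases "u < w") (auto simp: insert_commute)
qed

lemma degenerate_necklace:
  assumes "2 \<le> d"
  shows "degenerate d {..k * (d + 2)} (necklace d k)"
proof (rule degenerate_if_larger_neighbours_le[OF graph_necklace])
  fix v
  let ?F = "if v = 0 then {1, k * (d + 2)} else {v + 1..v + d}"
  have "{u \<in> {..k * (d + 2)}. {v, u} \<in> necklace d k \<and> v < u} \<subseteq> ?F"
    using assms by (auto simp: doubleton_mem_necklace_iff necklace_adj_def zero_not_mem_bead)
  moreover have "card ?F \<le> d"
    using assms card_insert_le_m1[of 2 "{k * (d + 2)}" 1] by auto
  moreover have "finite ?F"
    by simp
  ultimately show "card {u \<in> {..k * (d + 2)}. {v, u} \<in> necklace d k \<and> v < u} \<le> d"
    using card_mono le_trans by blast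
qed

lemma ex_necklace_neighbours:
  assumes v_bead: "v \<in> bead d i" and "i < k"
  shows "\<exists>N. card N = d + 1 \<and> v \<notin> N \<and> (\<forall>u\<in>N. {v, u} \<in> necklace d k)"
proof -
  define b where "b = i * (d + 2)"
  have bead_b: "bead d i = {b<..b + d + 2}"
    unfolding bead_def b_def by simp
  have "0 < v"
    using v_bead zero_not_mem_bead[of d i] by (cases v) auto
  have "v \<le> k * (d + 2)"
    using subsetD[OF bead_subset_atMost[OF \<open>i < k\<close>] v_bead] by simp
  consider "v = b + 1" | "b + 1 < v" "v < b + d + 2" | "v = b + d + 2"
    using v_bead bead_b by fastforce
  then show ?thesis
  proof cases
    case 1
    have "{v - 1, v} \<in> necklace d k"
      using necklace_path_edge[of "v - 1" k d] \<open>0 < v\<close> \<open>v \<le> k * (d + 2)\<close> by simp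
    moreover have "{v, u} \<in> necklace d k" if "u \<in> {v + 1..v + d}" for u
      using that 1 v_bead \<open>i < k\<close> by (intro necklace_bead_edge) (auto simp: bead_b)
    ultimately show ?thesis
      using \<open>0 < v\<close> by (intro exI[of _ "insert (v - 1) {v + 1..v + d}"]) (auto simp: insert_commute)
  next
    case 2
    have "{v, u} \<in> necklace d k" if "u \<in> bead d i - {v}" for u
      using that 2 v_bead \<open>i < k\<close> by (intro necklace_bead_edge) (auto simp: bead_b)
    moreover have "card (bead d i - {v}) = d + 1"
      using v_bead by (simp add: bead_b)
    ultimately show ?thesis
      by (intro exI[of _ "bead d i - {v}"]) auto
  next
    case 3
    define w where "w = (if v = k * (d + 2) then 0 else v + 1)"
    have "{v, w} \<in> necklace d k"
      using necklace_hub_edge[of k d] necklace_path_edge[of v k d] \<open>0 < v\<close> \<open>v \<le> k * (d + 2)\<close>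
      unfolding w_def by (auto intro: Nat.gr0I)
    moreover have "{v, u} \<in> necklace d k" if "u \<in> {v - d..v - 1}" for u
      using that 3 v_bead \<open>i < k\<close> by (intro necklace_bead_edge) (auto simp: bead_b)
    moreover have "w \<notin> insert v {v - d..v - 1}"
      using 3 unfolding w_def by auto
    ultimately show ?thesis
      using 3 by (intro exI[of _ "insert w {v - d..v - 1}"]) auto
  qed
qed

lemma necklace_degree_gt:
  assumes "0 < v" and "v \<le> k * (d + 2)"
  shows "d < degree (necklace d k) v"
proof -
  let ?i = "(v - 1) div (d + 2)"
  have "v \<in> bead d ?i"
    using assms(1) by (rule mem_bead_div)
  moreover have "?i < k"
    using calculation assms(2) by (rule bead_index_less)
  ultimately obtain N where "card N = d + 1" "v \<notin> N" "\<forall>u\<in>N. {v, u} \<in> necklace d k"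
    using ex_necklace_neighbours by blast
  then have "d + 1 \<le> degree (necklace d k) v"
    using card_le_degree[OF finite_necklace, of N v] by simp
  then show ?thesis
    by simp
qed

lemma necklace_edge_at_bead_interior:
  assumes "e \<in> necklace d k" and "x \<in> e" and "x \<in> bead_interior d i"
  shows "e \<subseteq> bead d i"
proof -
  obtain u v where e: "e = {u, v}" "u < v" "v \<le> k * (d + 2)" and adj: "necklace_adj d k u v"
    using assms(1) unfolding necklace_def by blast
  have x_bead: "x \<in> bead d i"
    using assms(3) bead_interior_subset by blast
  from adj consider "v = u + 1" | "u = 0" "v = k * (d + 2)" | j where "u \<in> bead d j" "v \<in> bead d j"
    unfolding necklace_adj_def by blast
  then show ?thesis
  proof cases
    case 1
    then show ?thesis
      using assms(2,3) e(1) unfolding bead_interior_def bead_def by auto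
  next
    case 2
    then have "x = k * (d + 2)"
      using assms(2,3) e(1) unfolding bead_interior_def by auto
    moreover have "k * (d + 2) \<in> bead d (k - 1)"
      using 2 e(2) unfolding bead_def by (cases k) auto
    ultimately have "i = k - 1"
      using x_bead bead_unique by blast
    then show ?thesis
      using assms(3) \<open>x = k * (d + 2)\<close> 2 e(2) unfolding bead_interior_def by (cases k) auto
  next
    case 3
    then have "i = j"
      using x_bead assms(2) e(1) bead_unique by blast
    then show ?thesis
      using 3 e(1) by simp
  qed
qed

definition bead_separation :: "nat \<Rightarrow> nat \<Rightarrow> nat \<Rightarrow> nat set \<times> nat set" where
  "bead_separation d k i = (bead d i, {..k * (d + 2)} - bead_interior d i)"

lemma separation_bead_separation:
  assumes "i < k"
  shows "separation {..k * (d + 2)} (necklace d k) (fst (bead_separation d k i)) (snd (bead_separation d k i))"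
proof -
  have "bead d i \<subseteq> {..k * (d + 2)}"
    using assms by (rule bead_subset_atMost)
  moreover have "bead d i - ({..k * (d + 2)} - bead_interior d i) = bead_interior d i"
    using calculation bead_interior_subset[of d i] by blast
  ultimately show ?thesis
    unfolding separation_def bead_separation_def
    using necklace_edge_at_bead_interior bead_interior_subset by fastforce
qed

lemma sep_order_bead_separation:
  assumes "i < k"
  shows "sep_order (fst (bead_separation d k i)) (snd (bead_separation d k i)) = 2"
proof -
  have "bead d i \<inter> ({..k * (d + 2)} - bead_interior d i) = bead d i - bead_interior d i"
    using bead_subset_atMost[OF assms] by blast
  also have "\<dots> = {i * (d + 2) + 1, i * (d + 2) + (d + 2)}"
    unfolding bead_def bead_interior_def by auto
  finally show ?thesis
    unfolding sep_order_def bead_separation_def by simp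
qed

lemma bead_subset_outside_interior:
  assumes "i < k" and "i \<noteq> j"
  shows "bead d i \<subseteq> {..k * (d + 2)} - bead_interior d j"
proof
  fix x assume "x \<in> bead d i"
  then have "x \<notin> bead_interior d j"
    using assms(2) bead_interior_subset bead_unique by blast
  then show "x \<in> {..k * (d + 2)} - bead_interior d j"
    using \<open>x \<in> bead d i\<close> assms(1) bead_subset_atMost by blast
qed

lemma independent_bead_separations:
  assumes "0 < d"
  shows "independent_seps (bead_separation d k ` {..<k})"
proof (rule independent_seps_image)
  fix i
  have "i * (d + 2) + 2 \<in> bead_interior d i"
    using assms unfolding bead_interior_def by simp
  then show "fst (bead_separation d k i) - snd (bead_separation d k i) \<noteq> {}"
    unfolding bead_separation_def fst_conv snd_conv using bead_interior_subset[of d i] by blast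
next
  fix i j assume "i \<in> {..<k}" "i \<noteq> j"
  then show "fst (bead_separation d k i) \<subseteq> snd (bead_separation d k j)"
    unfolding bead_separation_def using bead_subset_outside_interior by simp
qed

lemma inj_on_bead_separation: "inj_on (bead_separation d k) I"
proof (rule inj_onI)
  fix i j assume "bead_separation d k i = bead_separation d k j"
  then have "bead d i = bead d j"
    unfolding bead_separation_def by simp
  moreover have "i * (d + 2) + 1 \<in> bead d i"
    unfolding bead_def by simp
  ultimately show "i = j"
    using bead_unique[of "i * (d + 2) + 1" d i j] by simp
qed

lemma flap_necklace_ge:
  assumes "2 \<le> d"
  shows "k \<le> flap d {..k * (d + 2)} (necklace d k)"
proof -
  have "independent_seps (bead_separation d k ` {..<k})"
    using assms by (intro independent_bead_separations) simp
  moreover have "\<forall>(A, B)\<in>bead_separation d k ` {..<k}.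
      separation {..k * (d + 2)} (necklace d k) A B \<and> sep_order A B \<le> d"
    unfolding split_beta
    using assms separation_bead_separation sep_order_bead_separation by auto
  ultimately have "card (bead_separation d k ` {..<k}) \<le> flap d {..k * (d + 2)} (necklace d k)"
    by (rule card_le_flap[OF finite_atMost])
  then show ?thesis
    by (simp add: card_image inj_on_bead_separation)
qed

lemma alpha_necklace_le: "alpha d {..k * (d + 2)} (necklace d k) \<le> 1"
proof -
  have "v \<in> {0}" if "v \<in> {..k * (d + 2)}" and "degree (necklace d k) v \<le> d" for v
    using that necklace_degree_gt[of v k d] by (cases "v = 0") auto
  then show ?thesis
    using alpha_le_card[OF graph_necklace, of "{0}"] by simp
qed

theorem mainTheorem7:
  fixes d :: nat
  assumes "d \<ge> 2"
  shows "\<forall>N. \<exists>(V :: nat set) E. graph V E \<and> card V \<ge> N \<and> degenerate d V E \<and>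
            alpha d V E < flap d V E"
proof
  fix N :: nat
  let ?k = "N + 2"
  have "N \<le> card {..?k * (d + 2)}"
    by simp
  moreover have "alpha d {..?k * (d + 2)} (necklace d ?k) < flap d {..?k * (d + 2)} (necklace d ?k)"
    using alpha_necklace_le[of d ?k] flap_necklace_ge[OF assms, of ?k] by linarith
  ultimately show "\<exists>(V :: nat set) E. graph V E \<and> card V \<ge> N \<and> degenerate d V E \<and>
            alpha d V E < flap d V E"
    using graph_necklace degenerate_necklace[OF assms] by blast
qed

end
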